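(* Let $(x_n)_{n\in\mathbb{N}}$ be a sequence of finite binary trees with $\lim_{n\to\infty}|x_n|=\infty$. Then $(x_n)$ converges in the subtree size topology (i.e. $\lim_{n\to\infty}t(x_n,u)$ exists for all $u\in\mathbb{V}$) if and only if the sequence of probability measures $(\mu_{x_n})_{n\in\mathbb{N}}$ on $\mathbb{V}_\infty$ converges weakly; and in that case, if $\mu_{x_n}\to\mu$ weakly, then $\lim_{n\to\infty}t(x_n,u)=\mu(B_u)$ for all $u\in\mathbb{V}$.
   Context: $\mathbb{V}=\bigsqcup_{k\ge0}\{0,1\}^k$ is the set of finite $0$-$1$ words, with concatenation $u+v$, appending letters $u0,u1$, and prefix order. A finite binary tree is a finite prefix-stable subset $x\subseteq\mathbb{V}$ (if $(v_1,\dots,v_k)\in x$, $k>0$, then $(v_1,\dots,v_{k-1})\in x$); $|x|$ is its number of nodes. $t(x,u)=\frac{1}{|x|}|\{v\in\mathbb{V}: u+v\in x\}|$. The external boundary of $x$ is $\partial x=\{v\in\mathbb{V}\setminus x:\ v=w0 \text{ or } v=w1 \text{ for some } w\in x\}$ (it has $|x|+1$ elements when $x\neq\emptyset$). $\mathbb{V}_\infty=\{0,1\}^{\mathbb{N}}$ carries the ultrametric $d(v,w)=2^{-|v\wedge w|}$, where $|v\wedge w|$ is the length of the longest common prefix, making it a compact metric space whose Borel $\sigma$-field is generated by the coordinate projections; weak convergence of probability measures refers to this space. $B_u=\{v\in\mathbb{V}_\infty: u\text{ is a prefix of }v\}$. For $v=(v_1,\dots,v_k)\in\mathbb{V}$,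 $\mathrm{unif}(B_v)$ denotes the law of $(v_1,\dots,v_k,\eta_1,\eta_2,\dots)$ with $\eta_i$ i.i.d. uniform on $\{0,1\}$. For a finite binary tree $x$, $\mu_x=\frac{1}{|x|+1}\sum_{v\in\partial x}\mathrm{unif}(B_v)$. *)

theory Defs
  imports "HOL-Probability.Probability"
begin

text \<open>Finite 0-1 words are bool lists (False = 0, True = 1); concatenation is @,
  appending a letter is xs @ [b]. Infinite words are functions nat => bool.\<close>

type_synonym word = "bool list"
type_synonym iword = "nat \<Rightarrow> bool"

definition is_tree :: "word set \<Rightarrow> bool" where
  "is_tree x \<longleftrightarrow> finite x \<and> (\<forall>v b. v @ [b] \<in> x \<longrightarrow> v \<in> x)"

definition subtree_size :: "word set \<Rightarrow> word \<Rightarrow> real" where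
  "subtree_size x u = real (card {v. u @ v \<in> x}) / real (card x)"

definition ext_boundary :: "word set \<Rightarrow> word set" where
  "ext_boundary x = {v. v \<notin> x \<and> (\<exists>w\<in>x. v = w @ [False] \<or> v = w @ [True])}"

definition dist_inf :: "iword \<Rightarrow> iword \<Rightarrow> real" where
  "dist_inf v w = (if v = w then 0 else 2 powr (- real (LEAST n. v n \<noteq> w n)))"

text \<open>Borel sigma-field = product sigma-field generated by coordinate projections.\<close>
definition Vinf_space :: "iword measure" where
  "Vinf_space = PiM UNIV (\<lambda>_. count_space UNIV)"

definition cylinder :: "word \<Rightarrow> iword set" where
  "cylinder u = {v. \<forall>i<length u. v i = u ! i}"

definition unif_cyl :: "word \<Rightarrow> iword measure" where
  "unif_cyl v = distr (PiM UNIV (\<lambda>_. measure_pmf (pmf_of_set (UNIV :: bool set)))) Vinf_space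
     (\<lambda>\<eta> i. if i < length v then v ! i else \<eta> (i - length v))"

definition mu_tree :: "word set \<Rightarrow> iword measure" where
  "mu_tree x = measure_of UNIV (sets Vinf_space)
     (\<lambda>A. ennreal (1 / (real (card x) + 1)) * (\<Sum>v\<in>ext_boundary x. emeasure (unif_cyl v) A))"

definition prob_measure_Vinf :: "iword measure \<Rightarrow> bool" where
  "prob_measure_Vinf M \<longleftrightarrow> prob_space M \<and> sets M = sets Vinf_space"

definition continuous_Vinf :: "(iword \<Rightarrow> real) \<Rightarrow> bool" where
  "continuous_Vinf f \<longleftrightarrow>
     (\<forall>v. \<forall>e>0. \<exists>\<delta>>0. \<forall>w. dist_inf v w < \<delta> \<longrightarrow> \<bar>f w - f v\<bar> < e)"

definition weak_conv_Vinf :: "(nat \<Rightarrow> iword measure) \<Rightarrow> iword measure \<Rightarrow> bool" where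
  "weak_conv_Vinf M N \<longleftrightarrow>
     (\<forall>f. continuous_Vinf f \<and> (\<exists>B. \<forall>v. \<bar>f v\<bar> \<le> B) \<longrightarrow>
        (\<lambda>n. integral\<^sup>L (M n) f) \<longlonglongrightarrow> integral\<^sup>L N f)"

end

theory Submission
  imports Defs "HOL-Library.Sublist"
begin

text \<open>
  The boundary points of a tree \<open>x\<close> strictly below a node \<open>u\<close> number exactly
  \<open>|x\<^sub>u| + [u \<in> x]\<close>, where \<open>x\<^sub>u\<close> is the subtree at \<open>u\<close>, and at most one boundary point
  lies above \<open>u\<close>. Hence \<open>\<mu>\<^sub>x(B\<^sub>u)\<close> and \<open>t(x, u)\<close> differ by at most \<open>2 / (|x| + 1)\<close>, and
  convergence of subtree sizes is the same as convergence of the measures on cylinders.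
  Cylinders are clopen, so weak convergence implies convergence on cylinders. Conversely,
  limits \<open>F\<close> of cylinder masses satisfy \<open>F [] = 1\<close> and \<open>F u = F (u0) + F (u1)\<close>, so they are
  the cylinder masses of a probability measure: the image of the uniform distribution on
  \<open>[0, 1)\<close> under the map sending \<open>\<omega>\<close> to the branch of nested intervals of lengths \<open>F u\<close>
  containing it. By compactness of the space of infinite words, a continuous function is a
  uniform limit of functions constant on the cylinders of a fixed depth, so convergence on
  cylinders yields weak convergence.
\<close>

section \<open>Cylinders and uniform measures on them\<close>

lemma space_Vinf_space [simp]: "space Vinf_space = UNIV"
  by (simp add: Vinf_space_def space_PiM)

lemma cylinder_in_sets [measurable]: "cylinder u \<in> sets Vinf_space"
proof -
  have "cylinder u = {v \<in> space Vinf_space. \<forall>i\<in>{..<length u}. v i = u ! i}"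
    by (auto simp: cylinder_def)
  also have "\<dots> \<in> sets Vinf_space"
    unfolding Vinf_space_def by measurable
  finally show ?thesis .
qed

lemma cylinder_append_subset: "cylinder (u @ w) \<subseteq> cylinder u"
  by (auto simp: cylinder_def nth_append)

lemma cylinder_snoc: "cylinder (u @ [b]) = cylinder u \<inter> {v. v (length u) = b}"
  by (auto simp: cylinder_def nth_append less_Suc_eq)

lemma measure_cylinder_split:
  assumes "finite_measure M" "sets M = sets Vinf_space"
  shows "measure M (cylinder u) = measure M (cylinder (u @ [False])) + measure M (cylinder (u @ [True]))"
proof -
  have "cylinder u = cylinder (u @ [False]) \<union> cylinder (u @ [True])"
    and "cylinder (u @ [False]) \<inter> cylinder (u @ [True]) = {}"
    unfolding cylinder_snoc by auto
  then show ?thesis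
    using finite_measure.finite_measure_Union[OF assms(1)] assms(2) by simp
qed

definition itake :: "nat \<Rightarrow> iword \<Rightarrow> word" where
  "itake k v = map v [0..<k]"

lemma length_itake [simp]: "length (itake k v) = k"
  by (simp add: itake_def)

lemma mem_cylinder_iff_itake: "v \<in> cylinder u \<longleftrightarrow> itake (length u) v = u"
proof
  assume "v \<in> cylinder u"
  then show "itake (length u) v = u"
    by (intro nth_equalityI) (simp_all add: cylinder_def itake_def)
next
  assume u: "itake (length u) v = u"
  have "v i = u ! i" if "i < length u" for i
    using that by (subst u[symmetric]) (simp add: itake_def)
  then show "v \<in> cylinder u"
    by (simp add: cylinder_def)
qed

definition prepend :: "word \<Rightarrow> iword \<Rightarrow> iword" where
  "prepend v \<eta> = (\<lambda>i. if i < length v then v ! i else \<eta> (i - length v))"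

abbreviation coin_flips :: "iword measure" where
  "coin_flips \<equiv> PiM UNIV (\<lambda>_. measure_pmf (pmf_of_set UNIV))"

lemma unif_cyl_eq_distr_prepend: "unif_cyl v = distr coin_flips Vinf_space (prepend v)"
  unfolding unif_cyl_def prepend_def ..

lemma measurable_prepend: "prepend v \<in> coin_flips \<rightarrow>\<^sub>M Vinf_space"
  unfolding Vinf_space_def prepend_def
proof (rule measurable_PiM_single')
  fix i :: nat
  have "(\<lambda>\<eta>. \<eta> (i - length v)) \<in> coin_flips \<rightarrow>\<^sub>M measure_pmf (pmf_of_set UNIV)"
    by (rule measurable_component_singleton) simp
  then have "(\<lambda>\<eta>. \<eta> (i - length v)) \<in> coin_flips \<rightarrow>\<^sub>M count_space UNIV"
    by (simp add: measurable_def)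
  then show "(\<lambda>\<eta>. if i < length v then v ! i else \<eta> (i - length v)) \<in> coin_flips \<rightarrow>\<^sub>M count_space UNIV"
    by (cases "i < length v") simp_all
qed (simp add: space_PiM)

lemma prob_space_unif_cyl: "prob_space (unif_cyl v)"
  unfolding unif_cyl_eq_distr_prepend
  by (rule prob_space.prob_space_distr[OF prob_space_PiM measurable_prepend])
     (simp add: measure_pmf.prob_space_axioms)

lemma sets_unif_cyl [simp]: "sets (unif_cyl v) = sets Vinf_space"
  by (simp add: unif_cyl_def)

lemma emeasure_unif_cyl_cylinder:
  "emeasure (unif_cyl v) (cylinder u) = emeasure coin_flips (prepend v -` cylinder u \<inter> space coin_flips)"
  unfolding unif_cyl_eq_distr_prepend by (rule emeasure_distr[OF measurable_prepend cylinder_in_sets])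

lemma measure_unif_cyl_prefix:
  assumes "prefix u v"
  shows "measure (unif_cyl v) (cylinder u) = 1"
proof -
  have "prepend v -` cylinder u \<inter> space coin_flips = space coin_flips"
    using assms by (auto simp: prepend_def cylinder_def prefix_def nth_append)
  moreover have "emeasure coin_flips (space coin_flips) = 1"
    by (rule prob_space.emeasure_space_1[OF prob_space_PiM]) (simp add: measure_pmf.prob_space_axioms)
  ultimately show ?thesis
    using emeasure_unif_cyl_cylinder[of v u] by (simp add: measure_def)
qed

lemma measure_unif_cyl_parallel:
  assumes "u \<parallel> v"
  shows "measure (unif_cyl v) (cylinder u) = 0"
proof -
  obtain w b bs c cs where "b \<noteq> c" "u = w @ b # bs" "v = w @ c # cs"
    using parallel_decomp[OF assms] by blast
  then have "prepend v \<eta> \<notin> cylinder u" for \<eta>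
    unfolding cylinder_def prepend_def by (auto intro!: exI[of _ "length w"])
  then have "prepend v -` cylinder u \<inter> space coin_flips = {}"
    by blast
  then show ?thesis
    using emeasure_unif_cyl_cylinder[of v u] by (simp add: measure_def)
qed

section \<open>Subtrees and the external boundary\<close>

lemma is_tree_prefix_closed:
  assumes "is_tree x" "prefix w v" "v \<in> x"
  shows "w \<in> x"
  using assms(2,3)
proof (induction v rule: rev_induct)
  case (snoc b v)
  then show ?case
    using assms(1) by (auto simp: is_tree_def)
qed simp

lemma strict_prefix_snoc_iff: "strict_prefix u (w @ [b]) \<longleftrightarrow> prefix u w"
proof
  assume "strict_prefix u (w @ [b])"
  then show "prefix u w"
    unfolding prefix_order.less_le prefix_snoc by blast
next
  assume "prefix u w"
  then show "strict_prefix u (w @ [b])"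
    using prefix_snocD[of w b "w @ [b]"] prefix_order.le_less_trans by blast
qed

lemma strict_prefix_snocE:
  assumes "strict_prefix u t"
  obtains w b where "t = w @ [b]" "prefix u w"
proof -
  have "t \<noteq> []"
    using prefix_length_less[OF assms] by auto
  then have t: "t = butlast t @ [last t]"
    by simp
  from assms have "strict_prefix u (butlast t @ [last t])"
    by (simp only: t[symmetric])
  then have "prefix u (butlast t)"
    by (simp only: strict_prefix_snoc_iff)
  with t show thesis
    using that by blast
qed

lemma ext_boundary_subset_children: "ext_boundary x \<subseteq> (\<lambda>(w, b). w @ [b]) ` (x \<times> UNIV)"
  unfolding ext_boundary_def by force

lemma finite_ext_boundary: "finite x \<Longrightarrow> finite (ext_boundary x)"
  by (rule finite_subset[OF ext_boundary_subset_children]) simp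

lemma strict_prefix_ext_boundary_mem:
  assumes "is_tree x" "v \<in> ext_boundary x" "strict_prefix w v"
  shows "w \<in> x"
proof -
  obtain v' b where "v' \<in> x" "v = v' @ [b]"
    using assms(2) by (auto simp: ext_boundary_def)
  then show ?thesis
    using assms(1,3) is_tree_prefix_closed strict_prefix_snoc_iff by metis
qed

lemma card_subtree_eq: "card {w. u @ w \<in> x} = card {w \<in> x. prefix u w}"
proof -
  have "{w \<in> x. prefix u w} = (\<lambda>w. u @ w) ` {w. u @ w \<in> x}"
    by (auto simp: prefix_def)
  then show ?thesis
    by (simp add: card_image inj_on_def)
qed

lemma card_subtree_le: "finite x \<Longrightarrow> card {w. u @ w \<in> x} \<le> card x"
  unfolding card_subtree_eq by (rule card_mono) auto

lemma card_ext_boundary_below: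
  assumes tree: "is_tree x"
  shows "card {v \<in> ext_boundary x. strict_prefix u v} = card {w. u @ w \<in> x} + (if u \<in> x then 1 else 0)"
proof -
  define S where "S = {w \<in> x. prefix u w}"
  define T where "T = {w \<in> x. strict_prefix u w}"
  define E where "E = {v \<in> ext_boundary x. strict_prefix u v}"
  have fin: "finite S" "finite T" "finite E"
    using tree finite_ext_boundary by (auto simp: S_def T_def E_def is_tree_def)
  have "bij_betw (\<lambda>(w, b). w @ [b]) (S \<times> UNIV) (T \<union> E)"
  proof (rule bij_betw_imageI)
    show "inj_on (\<lambda>(w, b). w @ [b]) (S \<times> UNIV)"
      by (auto simp: inj_on_def)
    have "t \<in> (\<lambda>(w, b). w @ [b]) ` (S \<times> UNIV)" if "t \<in> T \<union> E" for t
    proof -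
      have "strict_prefix u t"
        using that by (auto simp: T_def E_def)
      then obtain w b where t: "t = w @ [b]" and "prefix u w"
        by (rule strict_prefix_snocE)
      moreover have "w \<in> x"
        using that tree t by (auto simp: T_def E_def ext_boundary_def is_tree_def)
      ultimately show ?thesis
        by (auto simp: S_def)
    qed
    then show "(\<lambda>(w, b). w @ [b]) ` (S \<times> UNIV) = T \<union> E"
      by (auto simp: S_def T_def E_def ext_boundary_def strict_prefix_snoc_iff)
  qed
  then have "card (S \<times> (UNIV :: bool set)) = card (T \<union> E)"
    by (rule bij_betw_same_card)
  moreover have "T \<inter> E = {}"
    by (auto simp: T_def E_def ext_boundary_def)
  ultimately have "2 * card S = card T + card E"
    using fin by (simp add: card_cartesian_product card_Un_disjoint)
  moreover have "card S = card T + (if u \<in> x then 1 else 0)"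
  proof -
    have "S = T \<union> ({u} \<inter> x)" "T \<inter> ({u} \<inter> x) = {}"
      by (auto simp: S_def T_def prefix_order.less_le)
    then show ?thesis
      using fin by (simp add: card_Un_disjoint)
  qed
  moreover have "card S = card {w. u @ w \<in> x}"
    unfolding S_def by (rule card_subtree_eq[symmetric])
  ultimately show ?thesis
    by (simp add: E_def)
qed

lemma card_ext_boundary_above_le_1:
  assumes tree: "is_tree x"
  shows "card {v \<in> ext_boundary x. prefix v u} \<le> 1"
proof -
  have "v1 = v2" if "v1 \<in> ext_boundary x" "v2 \<in> ext_boundary x" "prefix v1 u" "prefix v2 u" for v1 v2
  proof (rule ccontr)
    assume "v1 \<noteq> v2"
    then have "strict_prefix v1 v2 \<or> strict_prefix v2 v1"
      using prefix_same_cases[OF that(3,4)] by (blast intro: strict_prefixI)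
    moreover have "v1 \<notin> x" "v2 \<notin> x"
      using that(1,2) by (simp_all add: ext_boundary_def)
    ultimately show False
      using that(1,2) strict_prefix_ext_boundary_mem[OF tree] by blast
  qed
  then show ?thesis
    using tree finite_ext_boundary by (simp add: card_le_Suc0_iff_eq is_tree_def)
qed

lemma card_ext_boundary_le: "is_tree x \<Longrightarrow> card (ext_boundary x) \<le> card x + 1"
proof -
  assume tree: "is_tree x"
  have "ext_boundary x = {v \<in> ext_boundary x. strict_prefix [] v}"
    by (auto simp: ext_boundary_def strict_prefix_snoc_iff)
  then show ?thesis
    using card_ext_boundary_below[OF tree, of "[]"] by simp
qed

section \<open>Cylinder masses of the measure of a tree\<close>

lemma sets_mu_tree [simp]: "sets (mu_tree x) = sets Vinf_space"
  using sets.sigma_sets_eq[of Vinf_space] by (simp add: mu_tree_def sets_measure_of_conv)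

lemma space_mu_tree [simp]: "space (mu_tree x) = UNIV"
  using sets_eq_imp_space_eq[OF sets_mu_tree[of x]] by simp

lemma emeasure_mu_tree:
  assumes "A \<in> sets Vinf_space"
  shows "emeasure (mu_tree x) A =
    ennreal ((\<Sum>v\<in>ext_boundary x. measure (unif_cyl v) A) / (real (card x) + 1))"
proof -
  let ?c = "ennreal (1 / (real (card x) + 1))"
  have "countably_additive (sets Vinf_space) (\<lambda>A. ?c * (\<Sum>v\<in>ext_boundary x. emeasure (unif_cyl v) A))"
  proof (rule countably_additiveI)
    fix B :: "nat \<Rightarrow> iword set"
    assume B: "range B \<subseteq> sets Vinf_space" "disjoint_family B"
    have "(\<Sum>i. \<Sum>v\<in>ext_boundary x. emeasure (unif_cyl v) (B i))
        = (\<Sum>v\<in>ext_boundary x. \<Sum>i. emeasure (unif_cyl v) (B i))"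
      by (rule suminf_sum) (rule summableI)
    also have "\<dots> = (\<Sum>v\<in>ext_boundary x. emeasure (unif_cyl v) (\<Union>i. B i))"
      using B by (simp add: suminf_emeasure)
    finally show "(\<Sum>i. ?c * (\<Sum>v\<in>ext_boundary x. emeasure (unif_cyl v) (B i)))
        = ?c * (\<Sum>v\<in>ext_boundary x. emeasure (unif_cyl v) (\<Union>i. B i))"
      by simp
  qed
  then have "emeasure (mu_tree x) A = ?c * (\<Sum>v\<in>ext_boundary x. emeasure (unif_cyl v) A)"
    unfolding mu_tree_def
    using sets.sigma_algebra_axioms[of Vinf_space] assms
    by (intro emeasure_measure_of_sigma) (auto simp: positive_def)
  also have "\<dots> = ?c * ennreal (\<Sum>v\<in>ext_boundary x. measure (unif_cyl v) A)"
    using prob_space.finite_measure[OF prob_space_unif_cyl]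
    by (simp add: finite_measure.emeasure_eq_measure sum_ennreal)
  finally show ?thesis
    by (simp add: ennreal_mult' divide_inverse mult.commute)
qed

lemma measure_mu_tree:
  "A \<in> sets Vinf_space \<Longrightarrow>
    measure (mu_tree x) A = (\<Sum>v\<in>ext_boundary x. measure (unif_cyl v) A) / (real (card x) + 1)"
  by (simp add: measure_def emeasure_mu_tree sum_nonneg)

lemma finite_measure_mu_tree: "finite_measure (mu_tree x)"
  by (rule finite_measureI) (simp add: emeasure_mu_tree[OF sets.top[of Vinf_space, simplified]])

lemma measure_mu_tree_UNIV_le_1:
  assumes "is_tree x"
  shows "measure (mu_tree x) UNIV \<le> 1"
proof -
  have "(\<Sum>v\<in>ext_boundary x. measure (unif_cyl v) UNIV) = real (card (ext_boundary x))"
    using prob_space.prob_space[OF prob_space_unif_cyl] by (simp add: sets_eq_imp_space_eq[OF sets_unif_cyl])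
  also have "\<dots> \<le> real (card x) + 1"
    using card_ext_boundary_le[OF assms] by simp
  finally show ?thesis
    using sets.top[of Vinf_space] by (simp add: measure_mu_tree)
qed

lemma sum_unif_cyl_cylinder_bounds:
  fixes x :: "word set" and u :: word
  assumes tree: "is_tree x"
  defines "s \<equiv> real (card {w. u @ w \<in> x})"
    and "m \<equiv> (\<Sum>v\<in>ext_boundary x. measure (unif_cyl v) (cylinder u))"
  shows "s \<le> m" and "m \<le> s + 2"
proof -
  define P where "P v = measure (unif_cyl v) (cylinder u)" for v
  define E where "E = {v \<in> ext_boundary x. strict_prefix u v}"
  define Q where "Q = {v \<in> ext_boundary x. prefix v u}"
  define R where "R = {v \<in> ext_boundary x. u \<parallel> v}"
  have fin: "finite E" "finite Q" "finite R"
    using finite_ext_boundary tree by (auto simp: E_def Q_def R_def is_tree_def)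
  have "ext_boundary x = E \<union> Q \<union> R"
    by (auto simp: E_def Q_def R_def parallel_commute elim: prefix_cases[of _ u])
  moreover have "E \<inter> Q = {}" "(E \<union> Q) \<inter> R = {}"
    by (auto simp: E_def Q_def R_def parallel_def dest: prefix_order.less_imp_le)
  ultimately have m: "m = (\<Sum>v\<in>E. P v) + (\<Sum>v\<in>Q. P v) + (\<Sum>v\<in>R. P v)"
    using fin by (simp add: m_def P_def sum.union_disjoint)
  have "(\<Sum>v\<in>E. P v) = card E"
    by (simp add: P_def E_def measure_unif_cyl_prefix prefix_order.less_imp_le)
  also have "card E = s + (if u \<in> x then 1 else 0)"
    using card_ext_boundary_below[OF tree] by (simp add: E_def s_def)
  finally have E: "s \<le> (\<Sum>v\<in>E. P v)" "(\<Sum>v\<in>E. P v) \<le> s + 1"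
    by auto
  have "(\<Sum>v\<in>R. P v) = 0"
    by (simp add: P_def R_def measure_unif_cyl_parallel)
  moreover have "(\<Sum>v\<in>Q. P v) \<le> card Q"
    using sum_mono[of Q P "\<lambda>_. 1"] prob_space.prob_le_1[OF prob_space_unif_cyl] by (simp add: P_def)
  moreover have "card Q \<le> 1"
    using card_ext_boundary_above_le_1[OF tree] by (simp add: Q_def)
  moreover have "0 \<le> (\<Sum>v\<in>Q. P v)"
    by (simp add: P_def sum_nonneg)
  ultimately show "s \<le> m" "m \<le> s + 2"
    using m E by linarith+
qed

lemma abs_ratio_diff_le:
  fixes m s N :: real
  assumes "0 \<le> s" "s \<le> N" "s \<le> m" "m \<le> s + 2"
  shows "\<bar>m / (N + 1) - s / N\<bar> \<le> 2 / (N + 1)"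
proof (cases "N = 0")
  case False
  then have N: "N > 0"
    using assms by simp
  have "m / (N + 1) - s / N \<le> (s + 2) / (N + 1) - s / (N + 1)"
    using assms N by (intro diff_mono divide_right_mono divide_left_mono) auto
  also have "\<dots> = 2 / (N + 1)"
    by (simp add: diff_divide_distrib[symmetric])
  finally have upper: "m / (N + 1) - s / N \<le> 2 / (N + 1)" .
  have "- 2 / (N + 1) \<le> - (s / N) / (N + 1)"
    using assms N by (intro divide_right_mono) (auto simp: divide_le_eq)
  also have "\<dots> = s / (N + 1) - s / N"
    using N by (simp add: field_simps)
  also have "\<dots> \<le> m / (N + 1) - s / N"
    using assms N by (intro diff_right_mono divide_right_mono) auto
  finally show ?thesis
    using upper by (simp add: abs_le_iff)
qed (use assms in simp)

lemma abs_measure_mu_tree_cylinder_minus_subtree_size_le: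
  assumes "is_tree x"
  shows "\<bar>measure (mu_tree x) (cylinder u) - subtree_size x u\<bar> \<le> 2 / (real (card x) + 1)"
proof -
  have "card {w. u @ w \<in> x} \<le> card x"
    using assms by (intro card_subtree_le) (simp add: is_tree_def)
  then show ?thesis
    using abs_ratio_diff_le sum_unif_cyl_cylinder_bounds[OF assms, of u]
    by (simp add: measure_mu_tree subtree_size_def)
qed

lemma measure_mu_tree_cylinder_minus_subtree_size_tendsto_0:
  assumes trees: "\<And>n. is_tree (x n)"
    and size: "filterlim (\<lambda>n. card (x n)) at_top sequentially"
  shows "(\<lambda>n. measure (mu_tree (x n)) (cylinder u) - subtree_size (x n) u) \<longlonglongrightarrow> 0"
proof (rule Lim_null_comparison)
  show "\<forall>\<^sub>F n in sequentially. norm (measure (mu_tree (x n)) (cylinder u) - subtree_size (x n) u)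
      \<le> 2 / (real (card (x n)) + 1)"
    using abs_measure_mu_tree_cylinder_minus_subtree_size_le[OF trees] by simp
  have "filterlim (\<lambda>n. 1 + real (card (x n))) at_top sequentially"
    using filterlim_compose[OF filterlim_real_sequentially size]
    by (rule filterlim_tendsto_add_at_top[OF tendsto_const])
  then have "(\<lambda>n. 2 / (1 + real (card (x n)))) \<longlonglongrightarrow> 0"
    by (intro tendsto_divide_0[OF tendsto_const] filterlim_at_top_imp_at_infinity)
  then show "(\<lambda>n. 2 / (real (card (x n)) + 1)) \<longlonglongrightarrow> 0"
    by (simp add: add.commute)
qed

lemma measure_mu_tree_cylinder_tendsto_iff:
  assumes "\<And>n. is_tree (x n)" "filterlim (\<lambda>n. card (x n)) at_top sequentially"
  shows "(\<lambda>n. measure (mu_tree (x n)) (cylinder u)) \<longlonglongrightarrow> c \<longleftrightarrow> (\<lambda>n. subtree_size (x n) u) \<longlonglongrightarrow> c"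
  using Lim_transform[OF _ measure_mu_tree_cylinder_minus_subtree_size_tendsto_0[OF assms]]
    Lim_transform2[OF _ measure_mu_tree_cylinder_minus_subtree_size_tendsto_0[OF assms]]
  by blast

section \<open>Continuous functions on infinite words\<close>

lemma itake_eq_iff: "itake k v = itake k w \<longleftrightarrow> (\<forall>i<k. v i = w i)"
  by (auto simp: itake_def)

lemma take_itake: "K \<le> k \<Longrightarrow> take K (itake k v) = itake K v"
  by (simp add: itake_def take_map)

lemma mem_cylinder_itake: "v \<in> cylinder (itake k v)"
  by (simp add: mem_cylinder_iff_itake)

lemma itake_eq_if_dist_inf_less:
  assumes "dist_inf v w < 2 powr - real k"
  shows "itake k v = itake k w"
proof (cases "v = w")
  case False
  then have "2 powr - real (LEAST n. v n \<noteq> w n) < 2 powr - real k"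
    using assms by (simp add: dist_inf_def)
  then have "- real (LEAST n. v n \<noteq> w n) < - real k"
    using powr_less_cancel_iff[of "2::real"] by simp
  then have "k < (LEAST n. v n \<noteq> w n)"
    by (simp only: neg_less_iff_less of_nat_less_iff)
  then show ?thesis
    unfolding itake_eq_iff using not_less_Least less_trans by blast
qed simp

lemma dist_inf_le_if_itake_eq:
  assumes "itake k v = itake k w"
  shows "dist_inf v w \<le> 2 powr - real k"
proof (cases "v = w")
  case False
  then obtain n where "v n \<noteq> w n"
    by auto
  then have "v (LEAST n. v n \<noteq> w n) \<noteq> w (LEAST n. v n \<noteq> w n)"
    by (rule LeastI)
  then have "k \<le> (LEAST n. v n \<noteq> w n)"
    using assms not_le by (auto simp: itake_eq_iff)
  then show ?thesis
    using False by (simp add: dist_inf_def)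
qed (simp add: dist_inf_def)

lemma continuous_Vinf_indicator_cylinder: "continuous_Vinf (indicator (cylinder u))"
  unfolding continuous_Vinf_def
proof (intro allI impI)
  fix v :: iword and e :: real
  assume "e > 0"
  have "\<bar>indicator (cylinder u) w - indicator (cylinder u) v\<bar> < e"
    if "dist_inf v w < 2 powr - real (length u)" for w
    using itake_eq_if_dist_inf_less[OF that] \<open>e > 0\<close>
    by (simp add: mem_cylinder_iff_itake indicator_def)
  then show "\<exists>\<delta>>0. \<forall>w. dist_inf v w < \<delta> \<longrightarrow> \<bar>indicator (cylinder u) w - indicator (cylinder u) v\<bar> < e"
    by (intro exI[of _ "2 powr - real (length u)"]) simp
qed

lemma measure_cylinder_tendsto_if_weak_conv_Vinf:
  assumes "prob_measure_Vinf \<mu>" "weak_conv_Vinf M \<mu>" "\<And>n. sets (M n) = sets Vinf_space"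
  shows "(\<lambda>n. measure (M n) (cylinder u)) \<longlonglongrightarrow> measure \<mu> (cylinder u)"
proof -
  have "\<forall>v. \<bar>indicator (cylinder u) v :: real\<bar> \<le> 1"
    by (simp add: indicator_def)
  then have "(\<lambda>n. integral\<^sup>L (M n) (indicator (cylinder u))) \<longlonglongrightarrow> integral\<^sup>L \<mu> (indicator (cylinder u) :: iword \<Rightarrow> real)"
    using assms(2) continuous_Vinf_indicator_cylinder unfolding weak_conv_Vinf_def by blast
  moreover have "space (M n) = UNIV" for n
    using sets_eq_imp_space_eq[OF assms(3)] by simp
  moreover have "space \<mu> = UNIV"
    using assms(1) sets_eq_imp_space_eq[of \<mu> Vinf_space] by (simp add: prob_measure_Vinf_def)
  ultimately show ?thesis
    by simp
qed

definition osc_less :: "(iword \<Rightarrow> real) \<Rightarrow> real \<Rightarrow> word \<Rightarrow> bool" where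
  "osc_less f e u \<longleftrightarrow> (\<forall>v\<in>cylinder u. \<forall>w\<in>cylinder u. \<bar>f v - f w\<bar> < e)"

lemma osc_less_append: "osc_less f e u \<Longrightarrow> osc_less f e (u @ w)"
  using cylinder_append_subset unfolding osc_less_def by blast

lemma continuous_Vinf_osc_less_itake:
  assumes "continuous_Vinf f" "e > 0"
  obtains k where "osc_less f e (itake k v)"
proof -
  obtain d where d: "d > 0" "\<And>w. dist_inf v w < d \<Longrightarrow> \<bar>f w - f v\<bar> < e / 2"
    using assms unfolding continuous_Vinf_def by (meson half_gt_zero)
  obtain k where "1 / d < 2 ^ k"
    using real_arch_pow[of "2::real" "1 / d"] by auto
  then have "2 powr - real k < d"
    using d(1) by (simp add: powr_minus powr_realpow field_simps)
  then have close: "\<bar>f w - f v\<bar> < e / 2" if "w \<in> cylinder (itake k v)" for w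
    using that d(2) dist_inf_le_if_itake_eq[of k v w] by (simp add: mem_cylinder_iff_itake)
  have "osc_less f e (itake k v)"
    unfolding osc_less_def
  proof (intro ballI)
    fix w1 w2
    assume "w1 \<in> cylinder (itake k v)" "w2 \<in> cylinder (itake k v)"
    with close[of w1] close[of w2] show "\<bar>f w1 - f w2\<bar> < e"
      by linarith
  qed
  then show thesis
    by (rule that)
qed

definition deep_osc :: "(iword \<Rightarrow> real) \<Rightarrow> real \<Rightarrow> word \<Rightarrow> bool" where
  "deep_osc f e u \<longleftrightarrow> (\<forall>k. \<exists>w. length w = k \<and> \<not> osc_less f e (u @ w))"

lemma deep_osc_snoc:
  assumes "deep_osc f e u"
  shows "deep_osc f e (u @ [False]) \<or> deep_osc f e (u @ [True])"
proof (rule ccontr)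
  assume "\<not> ?thesis"
  then obtain k0 k1 where
    k0: "\<And>w. length w = k0 \<Longrightarrow> osc_less f e (u @ [False] @ w)" and
    k1: "\<And>w. length w = k1 \<Longrightarrow> osc_less f e (u @ [True] @ w)"
    unfolding deep_osc_def by auto
  obtain w where w: "length w = Suc (max k0 k1)" "\<not> osc_less f e (u @ w)"
    using assms unfolding deep_osc_def by blast
  then obtain b w' where bw: "w = b # w'" "length w' = max k0 k1"
    by (cases w) auto
  show False
  proof (cases b)
    case True
    have "osc_less f e ((u @ [True] @ take k1 w') @ drop k1 w')"
      by (rule osc_less_append[OF k1]) (simp add: bw)
    with w bw True show False
      by simp
  next
    case False
    have "osc_less f e ((u @ [False] @ take k0 w') @ drop k0 w')"
      by (rule osc_less_append[OF k0]) (simp add: bw)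
    with w bw False show False
      by simp
  qed
qed

primrec walk :: "(word \<Rightarrow> bool) \<Rightarrow> nat \<Rightarrow> word" where
  "walk g 0 = []"
| "walk g (Suc k) = walk g k @ [g (walk g k)]"

definition walk_limit :: "(word \<Rightarrow> bool) \<Rightarrow> iword" where
  "walk_limit g i = g (walk g i)"

lemma itake_walk_limit: "itake k (walk_limit g) = walk g k"
  by (induction k) (simp_all add: itake_def walk_limit_def)

lemma deep_osc_walk:
  assumes "deep_osc f e []"
  shows "deep_osc f e (walk (\<lambda>l. \<not> deep_osc f e (l @ [False])) k)"
proof (induction k)
  case (Suc k)
  let ?p = "walk (\<lambda>l. \<not> deep_osc f e (l @ [False])) k"
  show ?case
    using deep_osc_snoc[OF Suc.IH] by (cases "deep_osc f e (?p @ [False])") simp_all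
qed (use assms in simp)

text \<open>
  Koenig's lemma: if no depth works, oscillation \<open>\<ge> e\<close> persists along a branch chosen by
  \<^const>\<open>walk\<close>, contradicting continuity at the limit point of that branch.
\<close>

lemma continuous_Vinf_uniform:
  assumes "continuous_Vinf f" "e > 0"
  obtains k where "\<And>u. length u = k \<Longrightarrow> osc_less f e u"
proof -
  have "\<not> deep_osc f e []"
  proof
    assume deep: "deep_osc f e []"
    define g where "g = (\<lambda>l. \<not> deep_osc f e (l @ [False]))"
    obtain k where "osc_less f e (itake k (walk_limit g))"
      using continuous_Vinf_osc_less_itake[OF assms] by blast
    moreover have "deep_osc f e (itake k (walk_limit g))"
      using deep_osc_walk[OF deep] by (simp add: itake_walk_limit g_def)
    ultimately show False
      unfolding deep_osc_def by (metis append_Nil2 length_0_conv)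
  qed
  then show thesis
    using that unfolding deep_osc_def by auto
qed

definition pad :: "word \<Rightarrow> iword" where
  "pad u i = (i < length u \<and> u ! i)"

lemma pad_mem_cylinder: "pad u \<in> cylinder u"
  by (simp add: cylinder_def pad_def)

lemma finite_words_of_length: "finite {u :: word. length u = k}"
  using finite_lists_length_eq[of "UNIV :: bool set" k] by simp

definition cylinder_step :: "(iword \<Rightarrow> real) \<Rightarrow> nat \<Rightarrow> iword \<Rightarrow> real" where
  "cylinder_step f k v = (\<Sum>u | length u = k. f (pad u) * indicator (cylinder u) v)"

lemma cylinder_step_eq: "cylinder_step f k v = f (pad (itake k v))"
proof -
  have "cylinder_step f k v = (\<Sum>u | length u = k. if u = itake k v then f (pad u) else 0)"
    unfolding cylinder_step_def by (intro sum.cong refl) (auto simp: mem_cylinder_iff_itake)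
  then show ?thesis
    using finite_words_of_length by simp
qed

lemma borel_measurable_cylinder_step [measurable]: "cylinder_step f k \<in> borel_measurable Vinf_space"
  unfolding cylinder_step_def by measurable

lemma continuous_Vinf_uniform_approx:
  assumes "continuous_Vinf f" "e > 0"
  obtains K where "\<And>k v. K \<le> k \<Longrightarrow> \<bar>f v - cylinder_step f k v\<bar> < e"
proof -
  obtain K where K: "\<And>u. length u = K \<Longrightarrow> osc_less f e u"
    using continuous_Vinf_uniform[OF assms] by blast
  have "\<bar>f v - cylinder_step f k v\<bar> < e" if "K \<le> k" for k v
  proof -
    have "osc_less f e (take K (itake k v) @ drop K (itake k v))"
      using K that by (intro osc_less_append) (simp add: take_itake)
    then show ?thesis
      using mem_cylinder_itake pad_mem_cylinder by (simp add: cylinder_step_eq osc_less_def)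
  qed
  then show thesis
    using that by blast
qed

lemma borel_measurable_continuous_Vinf:
  assumes "continuous_Vinf f"
  shows "f \<in> borel_measurable Vinf_space"
proof (rule borel_measurable_LIMSEQ_real[where u = "cylinder_step f"])
  show "(\<lambda>k. cylinder_step f k v) \<longlonglongrightarrow> f v" for v
  proof (rule LIMSEQ_I)
    fix r :: real
    assume "r > 0"
    then obtain K where "\<And>k. K \<le> k \<Longrightarrow> \<bar>f v - cylinder_step f k v\<bar> < r"
      using continuous_Vinf_uniform_approx[OF assms] by metis
    then show "\<exists>K. \<forall>k\<ge>K. norm (cylinder_step f k v - f v) < r"
      by (auto simp: abs_minus_commute)
  qed
qed simp

section \<open>Convergence on cylinders implies weak convergence\<close>

lemma integral_cylinder_step:
  assumes "finite_measure N" "sets N = sets Vinf_space"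
  shows "integral\<^sup>L N (cylinder_step f k) = (\<Sum>u | length u = k. f (pad u) * measure N (cylinder u))"
proof -
  have "integrable N (\<lambda>v. f (pad u) * indicator (cylinder u) v)" for u
    using assms finite_measure.emeasure_finite[OF assms(1), of "cylinder u"]
    by (intro integrable_mult_right integrable_real_indicator) (auto simp: top.not_eq_extremum)
  moreover have "space N = UNIV"
    using sets_eq_imp_space_eq[OF assms(2)] by simp
  ultimately show ?thesis
    unfolding cylinder_step_def by (simp add: Bochner_Integration.integral_sum)
qed

lemma abs_integral_diff_le:
  fixes g h :: "'a \<Rightarrow> real"
  assumes "finite_measure N" "measure N (space N) \<le> 1"
    and "integrable N g" "integrable N h" "\<And>v. \<bar>g v - h v\<bar> \<le> e"
  shows "\<bar>integral\<^sup>L N g - integral\<^sup>L N h\<bar> \<le> e"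
proof -
  have "\<bar>integral\<^sup>L N g - integral\<^sup>L N h\<bar> = \<bar>integral\<^sup>L N (\<lambda>v. g v - h v)\<bar>"
    using assms(3,4) by simp
  also have "\<dots> \<le> integral\<^sup>L N (\<lambda>v. \<bar>g v - h v\<bar>)"
    using integral_norm_bound[of N "\<lambda>v. g v - h v"] by simp
  also have "\<dots> \<le> integral\<^sup>L N (\<lambda>v. e)"
    using assms by (intro integral_mono) (auto simp: finite_measure.integrable_const)
  also have "\<dots> = measure N (space N) * e"
    by simp
  also have "\<dots> \<le> e"
    using assms(2) order_trans[OF abs_ge_zero assms(5)] by (simp add: mult_left_le_one_le)
  finally show ?thesis .
qed

lemma abs_integral_minus_cylinder_sum_le:
  assumes N: "finite_measure N" "measure N (space N) \<le> 1" "sets N = sets Vinf_space"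
    and f: "continuous_Vinf f" "\<And>v. \<bar>f v\<bar> \<le> B"
    and approx: "\<And>v. \<bar>f v - cylinder_step f k v\<bar> \<le> e"
  shows "\<bar>integral\<^sup>L N f - (\<Sum>u | length u = k. f (pad u) * measure N (cylinder u))\<bar> \<le> e"
proof -
  have meas: "borel_measurable N = borel_measurable Vinf_space"
    by (rule measurable_cong_sets[OF N(3) refl])
  have "integrable N f"
    using f(2) borel_measurable_continuous_Vinf[OF f(1)]
    by (intro finite_measure.integrable_const_bound[OF N(1), of _ B]) (simp_all add: meas)
  moreover have "integrable N (cylinder_step f k)"
    using f(2) by (intro finite_measure.integrable_const_bound[OF N(1), of _ B])
      (simp_all add: meas cylinder_step_eq)
  ultimately have "\<bar>integral\<^sup>L N f - integral\<^sup>L N (cylinder_step f k)\<bar> \<le> e"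
    using approx by (rule abs_integral_diff_le[OF N(1,2)])
  then show ?thesis
    by (simp add: integral_cylinder_step[OF N(1,3)])
qed

lemma weak_conv_Vinf_if_measure_cylinder_tendsto:
  assumes sets: "\<And>n. sets (M n) = sets Vinf_space" and fin: "\<And>n. finite_measure (M n)"
    and le1: "\<And>n. measure (M n) (space (M n)) \<le> 1"
    and \<mu>: "prob_measure_Vinf \<mu>"
    and lim: "\<And>u. (\<lambda>n. measure (M n) (cylinder u)) \<longlonglongrightarrow> measure \<mu> (cylinder u)"
  shows "weak_conv_Vinf M \<mu>"
  unfolding weak_conv_Vinf_def
proof (intro allI impI, elim conjE exE)
  fix f :: "iword \<Rightarrow> real" and B
  assume f: "continuous_Vinf f" "\<forall>v. \<bar>f v\<bar> \<le> B"
  have \<mu>_fin: "finite_measure \<mu>" "measure \<mu> (space \<mu>) \<le> 1" "sets \<mu> = sets Vinf_space"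
    using \<mu> prob_space.finite_measure prob_space.prob_space[of \<mu>]
    by (auto simp: prob_measure_Vinf_def)
  show "(\<lambda>n. integral\<^sup>L (M n) f) \<longlonglongrightarrow> integral\<^sup>L \<mu> f"
    unfolding tendsto_iff dist_real_def
  proof (intro allI impI)
    fix r :: real
    assume "r > 0"
    then have "r / 3 > 0"
      by simp
    then obtain k where "\<And>k' v. k \<le> k' \<Longrightarrow> \<bar>f v - cylinder_step f k' v\<bar> < r / 3"
      using continuous_Vinf_uniform_approx[OF f(1) \<open>r / 3 > 0\<close>] by blast
    then have k: "\<And>v. \<bar>f v - cylinder_step f k v\<bar> \<le> r / 3"
      by (simp add: less_imp_le)
    define S where "S N = (\<Sum>u | length u = k. f (pad u) * measure N (cylinder u))" for N
    have close: "\<bar>integral\<^sup>L N f - S N\<bar> \<le> r / 3"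
      if "finite_measure N" "measure N (space N) \<le> 1" "sets N = sets Vinf_space" for N
      unfolding S_def using that f k by (intro abs_integral_minus_cylinder_sum_le) auto
    have "(\<lambda>n. S (M n)) \<longlonglongrightarrow> S \<mu>"
      unfolding S_def by (intro tendsto_sum tendsto_mult tendsto_const lim)
    then have "\<forall>\<^sub>F n in sequentially. \<bar>S (M n) - S \<mu>\<bar> < r / 3"
      using \<open>r / 3 > 0\<close> unfolding tendsto_iff dist_real_def by blast
    then show "\<forall>\<^sub>F n in sequentially. \<bar>integral\<^sup>L (M n) f - integral\<^sup>L \<mu> f\<bar> < r"
    proof (rule eventually_mono)
      fix n
      assume "\<bar>S (M n) - S \<mu>\<bar> < r / 3"
      with close[OF fin[of n] le1[of n] sets[of n]] close[OF \<mu>_fin]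
      show "\<bar>integral\<^sup>L (M n) f - integral\<^sup>L \<mu> f\<bar> < r"
        unfolding abs_le_iff abs_less_iff by linarith
    qed
  qed
qed

section \<open>Measures with prescribed cylinder masses\<close>

lemma measurable_walk:
  assumes "\<And>l. (\<lambda>\<omega>. g \<omega> l) \<in> M \<rightarrow>\<^sub>M count_space UNIV"
  shows "(\<lambda>\<omega>. walk (g \<omega>) k) \<in> M \<rightarrow>\<^sub>M count_space UNIV"
proof (induction k)
  case (Suc k)
  have "(\<lambda>\<omega>. l @ [g \<omega> l]) \<in> M \<rightarrow>\<^sub>M count_space UNIV" for l
    by (rule measurable_compose[OF assms]) simp
  then have "(\<lambda>\<omega>. walk (g \<omega>) k @ [g \<omega> (walk (g \<omega>) k)]) \<in> M \<rightarrow>\<^sub>M count_space UNIV"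
    by (rule measurable_compose_countable[OF _ Suc])
  then show ?case
    by simp
qed simp

lemma measurable_walk_limit:
  assumes "\<And>l. (\<lambda>\<omega>. g \<omega> l) \<in> M \<rightarrow>\<^sub>M count_space UNIV"
  shows "(\<lambda>\<omega>. walk_limit (g \<omega>)) \<in> M \<rightarrow>\<^sub>M Vinf_space"
  unfolding Vinf_space_def
proof (rule measurable_PiM_single')
  fix i
  show "(\<lambda>\<omega>. walk_limit (g \<omega>) i) \<in> M \<rightarrow>\<^sub>M count_space UNIV"
    unfolding walk_limit_def by (rule measurable_compose_countable[OF assms measurable_walk[OF assms]])
qed (simp add: space_PiM)

text \<open>The total mass of the words of length \<open>length u\<close> lexicographically smaller than \<open>u\<close>.\<close>

definition interval_left :: "(word \<Rightarrow> real) \<Rightarrow> word \<Rightarrow> real" where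
  "interval_left F u = (\<Sum>i<length u. if u ! i then F (take i u @ [False]) else 0)"

lemma interval_left_snoc:
  "interval_left F (u @ [b]) = interval_left F u + (if b then F (u @ [False]) else 0)"
proof -
  have "(\<Sum>i<length u. if (u @ [b]) ! i then F (take i (u @ [b]) @ [False]) else 0) = interval_left F u"
    unfolding interval_left_def by (intro sum.cong refl) (simp add: nth_append)
  then show ?thesis
    by (simp add: interval_left_def)
qed

definition word_interval :: "(word \<Rightarrow> real) \<Rightarrow> word \<Rightarrow> real set" where
  "word_interval F u = {interval_left F u ..< interval_left F u + F u}"

definition interval_code :: "(word \<Rightarrow> real) \<Rightarrow> real \<Rightarrow> iword" where
  "interval_code F \<omega> = walk_limit (\<lambda>l. interval_left F l + F (l @ [False]) \<le> \<omega>)"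

lemma itake_Suc_interval_code:
  "itake (Suc k) (interval_code F \<omega>) = itake k (interval_code F \<omega>) @
     [interval_left F (itake k (interval_code F \<omega>)) + F (itake k (interval_code F \<omega>) @ [False]) \<le> \<omega>]"
  by (simp add: interval_code_def itake_walk_limit)

lemma measurable_interval_code: "interval_code F \<in> borel \<rightarrow>\<^sub>M Vinf_space"
  unfolding interval_code_def[abs_def] by (rule measurable_walk_limit) simp

locale consistent_masses =
  fixes F :: "word \<Rightarrow> real"
  assumes mass_Nil: "F [] = 1"
    and mass_split: "F u = F (u @ [False]) + F (u @ [True])"
    and mass_nonneg: "0 \<le> F u"
begin

lemma word_interval_snoc_subset: "word_interval F (u @ [b]) \<subseteq> word_interval F u"
  using mass_split[of u] mass_nonneg[of "u @ [False]"] mass_nonneg[of "u @ [True]"]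
  by (cases b) (auto simp: word_interval_def interval_left_snoc)

lemma word_interval_subset_unit: "word_interval F u \<subseteq> {0..<1}"
proof (induction u rule: rev_induct)
  case Nil
  then show ?case
    by (simp add: word_interval_def interval_left_def mass_Nil)
next
  case (snoc b u)
  then show ?case
    using word_interval_snoc_subset by blast
qed

lemma mem_word_interval_itake_interval_code:
  "\<omega> \<in> {0..<1} \<Longrightarrow> \<omega> \<in> word_interval F (itake k (interval_code F \<omega>))"
proof (induction k)
  case 0
  then show ?case
    by (simp add: itake_def word_interval_def interval_left_def mass_Nil)
next
  case (Suc k)
  then show ?case
    using mass_split[of "itake k (interval_code F \<omega>)"]
    by (auto simp: itake_Suc_interval_code word_interval_def interval_left_snoc)
qed

lemma itake_interval_code_eq:
  "\<omega> \<in> word_interval F u \<Longrightarrow> itake (length u) (interval_code F \<omega>) = u"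
proof (induction u rule: rev_induct)
  case (snoc b u)
  then have "itake (length u) (interval_code F \<omega>) = u"
    using word_interval_snoc_subset by blast
  moreover have "(interval_left F u + F (u @ [False]) \<le> \<omega>) = b"
    using snoc.prems mass_nonneg[of "u @ [True]"]
    by (cases b) (auto simp: word_interval_def interval_left_snoc)
  ultimately show ?case
    by (simp add: itake_Suc_interval_code)
qed (simp add: itake_def)

lemma interval_code_preimage_cylinder: "{0..<1} \<inter> interval_code F -` cylinder u = word_interval F u"
  using word_interval_subset_unit[of u] itake_interval_code_eq mem_word_interval_itake_interval_code
  by (auto simp: mem_cylinder_iff_itake) metis

lemma exists_measure_with_cylinder_masses:
  "\<exists>\<mu>. prob_measure_Vinf \<mu> \<and> (\<forall>u. measure \<mu> (cylinder u) = F u)"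
proof -
  define U where "U = uniform_measure lborel {0..<(1::real)}"
  have U: "prob_space U" "sets U = sets borel"
    unfolding U_def by (auto intro: prob_space_uniform_measure)
  have code: "interval_code F \<in> U \<rightarrow>\<^sub>M Vinf_space"
    using measurable_interval_code measurable_cong_sets[OF U(2) refl] by blast
  define \<mu> where "\<mu> = distr U Vinf_space (interval_code F)"
  have "prob_space \<mu>"
    unfolding \<mu>_def by (rule prob_space.prob_space_distr[OF U(1) code])
  moreover have "sets \<mu> = sets Vinf_space"
    by (simp add: \<mu>_def)
  moreover have "measure \<mu> (cylinder u) = F u" for u
  proof -
    have "space U = UNIV"
      using sets_eq_imp_space_eq[OF U(2)] by simp
    then have "emeasure \<mu> (cylinder u) = emeasure U (interval_code F -` cylinder u)"
      unfolding \<mu>_def by (simp add: emeasure_distr[OF code cylinder_in_sets])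
    also have "\<dots> = emeasure lborel ({0..<1} \<inter> interval_code F -` cylinder u) / emeasure lborel {0..<(1::real)}"
    proof -
      have "interval_code F -` cylinder u \<in> sets lborel"
        using measurable_sets[OF measurable_interval_code[of F] cylinder_in_sets[of u]] by simp
      then show ?thesis
        unfolding U_def by (simp add: emeasure_uniform_measure)
    qed
    also have "\<dots> = ennreal (F u)"
      using mass_nonneg[of u]
      by (simp add: interval_code_preimage_cylinder word_interval_def divide_ennreal_def)
    finally show ?thesis
      using mass_nonneg[of u] by (simp add: measure_def)
  qed
  ultimately show ?thesis
    unfolding prob_measure_Vinf_def by blast
qed

end

lemma consistent_masses_if_subtree_size_tendsto:
  assumes trees: "\<And>n. is_tree (x n)"
    and size: "filterlim (\<lambda>n. card (x n)) at_top sequentially"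
    and lim: "\<And>u. (\<lambda>n. subtree_size (x n) u) \<longlonglongrightarrow> F u"
  shows "consistent_masses F"
proof
  have "\<forall>\<^sub>F n in sequentially. 1 \<le> card (x n)"
    using size by (simp add: filterlim_at_top)
  then have "\<forall>\<^sub>F n in sequentially. subtree_size (x n) [] = 1"
    by (rule eventually_mono) (simp add: subtree_size_def)
  then show "F [] = 1"
    using LIMSEQ_unique[OF lim tendsto_eventually] by blast
  show "F u = F (u @ [False]) + F (u @ [True])" for u
  proof -
    have mu_lim: "(\<lambda>n. measure (mu_tree (x n)) (cylinder v)) \<longlonglongrightarrow> F v" for v
      using lim measure_mu_tree_cylinder_tendsto_iff[OF trees size] by blast
    have split: "measure (mu_tree (x n)) (cylinder u) =
        measure (mu_tree (x n)) (cylinder (u @ [False])) + measure (mu_tree (x n)) (cylinder (u @ [True]))"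
      for n by (rule measure_cylinder_split[OF finite_measure_mu_tree sets_mu_tree])
    have "(\<lambda>n. measure (mu_tree (x n)) (cylinder u)) \<longlonglongrightarrow> F (u @ [False]) + F (u @ [True])"
      unfolding split by (intro tendsto_add mu_lim)
    then show ?thesis
      using mu_lim[of u] LIMSEQ_unique by blast
  qed
  show "0 \<le> F u" for u
    by (rule LIMSEQ_le_const[OF lim]) (simp add: subtree_size_def)
qed

lemma subtree_size_tendsto_if_weak_conv_Vinf:
  assumes "\<And>n. is_tree (x n)" "filterlim (\<lambda>n. card (x n)) at_top sequentially"
    and "prob_measure_Vinf \<mu>" "weak_conv_Vinf (\<lambda>n. mu_tree (x n)) \<mu>"
  shows "(\<lambda>n. subtree_size (x n) u) \<longlonglongrightarrow> measure \<mu> (cylinder u)"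
  unfolding measure_mu_tree_cylinder_tendsto_iff[OF assms(1,2), symmetric]
  by (rule measure_cylinder_tendsto_if_weak_conv_Vinf[OF assms(3,4)]) simp

lemma weak_conv_Vinf_if_subtree_size_convergent:
  assumes trees: "\<And>n. is_tree (x n)"
    and size: "filterlim (\<lambda>n. card (x n)) at_top sequentially"
    and conv: "\<And>u. convergent (\<lambda>n. subtree_size (x n) u)"
  shows "\<exists>\<mu>. prob_measure_Vinf \<mu> \<and> weak_conv_Vinf (\<lambda>n. mu_tree (x n)) \<mu>"
proof -
  define F where "F u = lim (\<lambda>n. subtree_size (x n) u)" for u
  have lim: "(\<lambda>n. subtree_size (x n) u) \<longlonglongrightarrow> F u" for u
    using conv unfolding F_def by (simp add: convergent_LIMSEQ_iff)
  then interpret consistent_masses F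
    by (rule consistent_masses_if_subtree_size_tendsto[OF trees size])
  obtain \<mu> where \<mu>: "prob_measure_Vinf \<mu>" "\<And>u. measure \<mu> (cylinder u) = F u"
    using exists_measure_with_cylinder_masses by blast
  have "weak_conv_Vinf (\<lambda>n. mu_tree (x n)) \<mu>"
    using trees measure_mu_tree_UNIV_le_1 \<mu> lim measure_mu_tree_cylinder_tendsto_iff[OF trees size]
    by (intro weak_conv_Vinf_if_measure_cylinder_tendsto finite_measure_mu_tree) simp_all
  with \<mu>(1) show ?thesis
    by blast
qed

theorem theorem2:
  fixes x :: "nat \<Rightarrow> word set"
  assumes trees: "\<And>n. is_tree (x n)"
    and size_inf: "filterlim (\<lambda>n. card (x n)) at_top sequentially"
  shows "((\<forall>u. convergent (\<lambda>n. subtree_size (x n) u)) \<longleftrightarrow>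
            (\<exists>\<mu>. prob_measure_Vinf \<mu> \<and> weak_conv_Vinf (\<lambda>n. mu_tree (x n)) \<mu>))
       \<and> (\<forall>\<mu>. prob_measure_Vinf \<mu> \<and> weak_conv_Vinf (\<lambda>n. mu_tree (x n)) \<mu> \<longrightarrow>
            (\<forall>u. (\<lambda>n. subtree_size (x n) u) \<longlonglongrightarrow> measure \<mu> (cylinder u)))"
proof -
  have limit: "\<forall>\<mu>. prob_measure_Vinf \<mu> \<and> weak_conv_Vinf (\<lambda>n. mu_tree (x n)) \<mu> \<longrightarrow>
      (\<forall>u. (\<lambda>n. subtree_size (x n) u) \<longlonglongrightarrow> measure \<mu> (cylinder u))"
    using subtree_size_tendsto_if_weak_conv_Vinf[OF trees size_inf] by blast
  then have "(\<exists>\<mu>. prob_measure_Vinf \<mu> \<and> weak_conv_Vinf (\<lambda>n. mu_tree (x n)) \<mu>) \<Longrightarrow>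
      \<forall>u. convergent (\<lambda>n. subtree_size (x n) u)"
    by (auto intro: convergentI)
  with limit show ?thesis
    using weak_conv_Vinf_if_subtree_size_convergent[OF trees size_inf] by blast
qed

end
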